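(* For any infinite cardinality $\kappa$, $\Delta_{c_0(\kappa)}^{(c)}(R)=2R$ for all $R\in[0,\infty)$.
   Context: For a cardinal $\kappa$, $c_0(\kappa)$ is the space of real families $(x_\xi)_{\xi<\kappa}$ such that $\{\xi: |x_\xi|>\eta\}$ is finite for every $\eta>0$, with the sup norm. For a metric space $X$ and a cover $\mathcal{U}$ of $X$: $\mathrm{diam}(\mathcal{U})=\sup_{U\in\mathcal{U}}\mathrm{diam}(U)$; $\mathcal{L}(\mathcal{U})=\sup\{d\in[0,\infty): \text{every } E\subseteq X \text{ with } \mathrm{diam}(E)<d \text{ is contained in some } U\in\mathcal{U}\}$; $\mathcal{U}$ is point-finite if each point lies in only finitely many members. $\Delta_X^{(c)}(R)=\inf\{\mathrm{diam}(\mathcal{U}): \mathcal{U} \text{ a point-finite cover of } X,\ \mathcal{L}(\mathcal{U})\geq R\}$. *)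

theory Defs
  imports "HOL-Analysis.Analysis"
begin

text \<open>Diameters take values in the extended reals (unbounded sets have diameter \<infinity>);
  the diameter of the empty set is taken to be 0.\<close>

definition set_diam :: "('a \<Rightarrow> 'a \<Rightarrow> real) \<Rightarrow> 'a set \<Rightarrow> ereal" where
  "set_diam d E = Sup ({0} \<union> {ereal (d x y) | x y. x \<in> E \<and> y \<in> E})"

definition is_cover :: "'a set \<Rightarrow> 'a set set \<Rightarrow> bool" where
  "is_cover X \<U> \<longleftrightarrow> (\<forall>U\<in>\<U>. U \<subseteq> X) \<and> \<Union>\<U> = X"

definition point_finite :: "'a set \<Rightarrow> 'a set set \<Rightarrow> bool" where
  "point_finite X \<U> \<longleftrightarrow> (\<forall>x\<in>X. finite {U \<in> \<U>. x \<in> U})"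

definition cover_diam :: "('a \<Rightarrow> 'a \<Rightarrow> real) \<Rightarrow> 'a set set \<Rightarrow> ereal" where
  "cover_diam d \<U> = (SUP U\<in>\<U>. set_diam d U)"

definition lebesgue_num :: "'a set \<Rightarrow> ('a \<Rightarrow> 'a \<Rightarrow> real) \<Rightarrow> 'a set set \<Rightarrow> ereal" where
  "lebesgue_num X d \<U> = Sup {ereal r | r. 0 \<le> r \<and>
     (\<forall>E. E \<subseteq> X \<and> set_diam d E < ereal r \<longrightarrow> (\<exists>U\<in>\<U>. E \<subseteq> U))}"

definition Delta_c :: "'a set \<Rightarrow> ('a \<Rightarrow> 'a \<Rightarrow> real) \<Rightarrow> real \<Rightarrow> ereal" where
  "Delta_c X d R = Inf {cover_diam d \<U> | \<U>. is_cover X \<U> \<and> point_finite X \<U>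
                         \<and> lebesgue_num X d \<U> \<ge> ereal R}"

text \<open>c_0(\<kappa>), where \<kappa> is the cardinality of the index type 'k, with the sup metric.\<close>

definition c0 :: "('k \<Rightarrow> real) set" where
  "c0 = {x. \<forall>\<eta>>0. finite {\<xi>. \<bar>x \<xi>\<bar> > \<eta>}}"

definition sup_dist :: "('k \<Rightarrow> real) \<Rightarrow> ('k \<Rightarrow> real) \<Rightarrow> real" where
  "sup_dist x y = (SUP \<xi>. \<bar>x \<xi> - y \<xi>\<bar>)"

end

theory Submission
  imports Defs
begin

text \<open>Lower bound: if a point-finite cover of c_0(\<kappa>) has Lebesgue number larger than r, then
  for each coordinate k the vectors with k-th entry in {-r, 0} and all other entries in {0, r}
  form a set of diameter r, hence lie in a common member U_k. All these sets contain 0, so by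
  point-finiteness U_k = U_l for some k \<noteq> l because \<kappa> is infinite; that member contains both
  r e_k and -r e_k and so has diameter at least 2r.

  Upper bound: cover the real line by intervals of length 2a overlapping in length a, with a
  central interval [-(a+\<delta>), a+\<delta>] and all other intervals at distance at least \<delta> from 0.
  The sets of points of c_0(\<kappa>) whose coordinates lie in prescribed intervals of this family form
  a cover with Lebesgue number a and diameter at most 2a+2\<delta>; it is point-finite because
  a point of c_0(\<kappa>) has only finitely many coordinates of modulus at least \<delta>.\<close>

lemma set_diam_leI:
  assumes "\<And>x y. x \<in> E \<Longrightarrow> y \<in> E \<Longrightarrow> d x y \<le> c" "0 \<le> c"
  shows "set_diam d E \<le> ereal c"
  unfolding set_diam_def using assms by (intro Sup_least) auto

lemma dist_le_set_diam:
  assumes "x \<in> E" "y \<in> E"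
  shows "ereal (d x y) \<le> set_diam d E"
  unfolding set_diam_def using assms by (intro Sup_upper) auto

lemma set_diam_nonneg: "0 \<le> set_diam d E"
  unfolding set_diam_def by (intro Sup_upper) auto

lemma set_diam_less_ereal_obtains_real:
  assumes "set_diam d E < ereal a"
  obtains c where "0 \<le> c" "c < a" "\<And>x y. x \<in> E \<Longrightarrow> y \<in> E \<Longrightarrow> d x y \<le> c"
proof -
  obtain c where c: "set_diam d E = ereal c"
    using set_diam_nonneg[of d E] assms by (cases "set_diam d E") auto
  show thesis
  proof
    show "0 \<le> c" "c < a" using set_diam_nonneg[of d E] assms c by auto
    show "d x y \<le> c" if "x \<in> E" "y \<in> E" for x y
      using dist_le_set_diam[OF that, of d] c by simp
  qed
qed

lemma lebesgue_num_geI: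
  assumes "0 \<le> r" "\<And>E. E \<subseteq> X \<Longrightarrow> set_diam d E < ereal r \<Longrightarrow> \<exists>U\<in>\<U>. E \<subseteq> U"
  shows "ereal r \<le> lebesgue_num X d \<U>"
  unfolding lebesgue_num_def using assms by (intro Sup_upper) auto

lemma lebesgue_numE:
  assumes "ereal R \<le> lebesgue_num X d \<U>" "r < R"
  obtains r' where "r < r'" "\<And>E. E \<subseteq> X \<Longrightarrow> set_diam d E < ereal r' \<Longrightarrow> \<exists>U\<in>\<U>. E \<subseteq> U"
proof -
  have "ereal r < lebesgue_num X d \<U>"
    using assms(2) by (intro less_le_trans[OF _ assms(1)]) simp
  then show thesis using that unfolding lebesgue_num_def less_Sup_iff by auto
qed

lemma Delta_c_le_cover_diam:
  assumes "is_cover X \<U>" "point_finite X \<U>" "ereal R \<le> lebesgue_num X d \<U>"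
  shows "Delta_c X d R \<le> cover_diam d \<U>"
  unfolding Delta_c_def using assms by (intro Inf_lower) blast

lemma Delta_c_geI:
  assumes "\<And>\<U>. is_cover X \<U> \<Longrightarrow> point_finite X \<U> \<Longrightarrow> ereal R \<le> lebesgue_num X d \<U>
             \<Longrightarrow> c \<le> cover_diam d \<U>"
  shows "c \<le> Delta_c X d R"
  unfolding Delta_c_def using assms by (intro Inf_greatest) blast

lemma set_diam_le_cover_diam: "U \<in> \<U> \<Longrightarrow> set_diam d U \<le> cover_diam d \<U>"
  unfolding cover_diam_def by (rule SUP_upper)

lemma c0_bounded:
  assumes "x \<in> c0"
  shows "bdd_above (range (\<lambda>\<xi>. \<bar>x \<xi>\<bar>))"
proof -
  have "finite {\<xi>. \<bar>x \<xi>\<bar> > 1}" using assms unfolding c0_def by auto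
  then have "bdd_above ((\<lambda>\<xi>. \<bar>x \<xi>\<bar>) ` {\<xi>. \<bar>x \<xi>\<bar> > 1})" by simp
  then obtain B where "\<And>\<xi>. \<bar>x \<xi>\<bar> > 1 \<Longrightarrow> \<bar>x \<xi>\<bar> \<le> B" by (auto simp: bdd_above_def)
  then have "\<bar>x \<xi>\<bar> \<le> max 1 B" for \<xi> by (cases "\<bar>x \<xi>\<bar> > 1") force+
  then show ?thesis by (intro bdd_aboveI2)
qed

lemma abs_le_sup_dist:
  assumes "x \<in> c0" "y \<in> c0"
  shows "\<bar>x \<xi> - y \<xi>\<bar> \<le> sup_dist x y"
proof -
  obtain A B where "\<And>\<xi>. \<bar>x \<xi>\<bar> \<le> A" "\<And>\<xi>. \<bar>y \<xi>\<bar> \<le> B"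
    using c0_bounded[OF assms(1)] c0_bounded[OF assms(2)] by (meson bdd_above.E rangeI)
  then have "\<bar>x \<xi> - y \<xi>\<bar> \<le> A + B" for \<xi> by (meson abs_triangle_ineq4 add_mono order_trans)
  then have "bdd_above (range (\<lambda>\<xi>. \<bar>x \<xi> - y \<xi>\<bar>))" by (intro bdd_aboveI2)
  then show ?thesis unfolding sup_dist_def by (intro cSUP_upper) auto
qed

lemma sup_dist_leI:
  assumes "\<And>\<xi>. \<bar>x \<xi> - y \<xi>\<bar> \<le> c"
  shows "sup_dist x y \<le> c"
  unfolding sup_dist_def using assms by (intro cSUP_least) auto

lemma c0_if_finite_support:
  assumes "finite {\<xi>. x \<xi> \<noteq> 0}"
  shows "x \<in> c0"
  unfolding c0_def using assms by (auto elim: rev_finite_subset)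

lemma c0_unit_vector: "(\<lambda>\<xi>. if \<xi> = k then c else 0) \<in> c0"
  by (rule c0_if_finite_support) (auto elim: rev_finite_subset[of "{k}"])

lemma zero_in_c0: "(\<lambda>_. 0) \<in> c0"
  by (rule c0_if_finite_support) simp

definition grid_interval :: "real \<Rightarrow> real \<Rightarrow> int \<Rightarrow> real set" where
  "grid_interval a \<delta> m =
     (if m = 0 then {-(a + \<delta>) .. a + \<delta>}
      else if m > 0 then {\<delta> + (of_int m - 1) * a .. \<delta> + (of_int m + 1) * a}
      else {-(\<delta> + (- of_int m + 1) * a) .. -(\<delta> + (- of_int m - 1) * a)})"

lemma uminus_mem_grid_interval_iff: "- u \<in> grid_interval a \<delta> (- m) \<longleftrightarrow> u \<in> grid_interval a \<delta> m"
  by (auto simp: grid_interval_def)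

lemma grid_interval_dist_le:
  assumes "u \<in> grid_interval a \<delta> m" "v \<in> grid_interval a \<delta> m" "0 \<le> a" "0 \<le> \<delta>"
  shows "\<bar>u - v\<bar> \<le> 2 * a + 2 * \<delta>"
  using assms by (auto simp: grid_interval_def algebra_simps split: if_splits)

lemma abs_ge_if_mem_grid_interval:
  assumes "m \<noteq> 0" "u \<in> grid_interval a \<delta> m" "0 \<le> a"
  shows "\<delta> + (\<bar>of_int m\<bar> - 1) * a \<le> \<bar>u\<bar>"
  using assms by (auto simp: grid_interval_def split: if_splits)

lemma finite_grid_indices:
  assumes "0 < a" "0 \<le> \<delta>"
  shows "finite {m. u \<in> grid_interval a \<delta> m}"
proof -
  have "\<bar>m\<bar> \<le> \<lceil>\<bar>u\<bar> / a\<rceil> + 1" if "u \<in> grid_interval a \<delta> m" for m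
  proof (cases "m = 0")
    case False
    then have "(\<bar>of_int m\<bar> - 1) * a \<le> \<bar>u\<bar>"
      using abs_ge_if_mem_grid_interval[OF False that] assms by linarith
    then have "of_int (\<bar>m\<bar> - 1) \<le> \<bar>u\<bar> / a" using assms(1) by (simp add: pos_le_divide_eq)
    then show ?thesis by linarith
  next
    case True
    have "0 \<le> \<bar>u\<bar> / a" using assms by simp
    then have "0 \<le> \<lceil>\<bar>u\<bar> / a\<rceil>" by linarith
    then show ?thesis using True by simp
  qed
  then have "{m. u \<in> grid_interval a \<delta> m} \<subseteq> {-(\<lceil>\<bar>u\<bar> / a\<rceil> + 1) .. \<lceil>\<bar>u\<bar> / a\<rceil> + 1}"
    by (force simp: abs_le_iff)
  then show ?thesis by (rule finite_subset) simp
qed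

lemma interval_subset_grid_interval_pos:
  assumes "0 < a" "\<delta> \<le> lo" "d < a"
  shows "\<exists>m. {lo .. lo + d} \<subseteq> grid_interval a \<delta> m"
proof -
  define f where "f = \<lfloor>(lo - \<delta>) / a\<rfloor>"
  have "0 \<le> f" using assms unfolding f_def by simp
  moreover have "of_int f * a \<le> lo - \<delta>" "lo - \<delta> < (of_int f + 1) * a"
    unfolding f_def using floor_divide_lower floor_divide_upper assms(1) by blast+
  ultimately have "{lo .. lo + d} \<subseteq> grid_interval a \<delta> (f + 1)"
    using assms by (auto simp: grid_interval_def algebra_simps)
  then show ?thesis ..
qed

lemma interval_subset_grid_interval:
  assumes "0 < a" "0 \<le> \<delta>" "0 \<le> d" "d < a"
  shows "\<exists>m. {lo .. lo + d} \<subseteq> grid_interval a \<delta> m"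
proof -
  consider "-(a + \<delta>) \<le> lo \<and> lo + d \<le> a + \<delta>" | "a + \<delta> < lo + d" | "lo < -(a + \<delta>)" by linarith
  then show ?thesis
  proof cases
    case 1
    then have "{lo .. lo + d} \<subseteq> grid_interval a \<delta> 0" by (auto simp: grid_interval_def)
    then show ?thesis ..
  next
    case 2
    then show ?thesis using assms by (intro interval_subset_grid_interval_pos) auto
  next
    case 3
    then obtain m where "{-(lo + d) .. -(lo + d) + d} \<subseteq> grid_interval a \<delta> m"
      using assms interval_subset_grid_interval_pos[of a \<delta> "-(lo + d)" d] by auto
    have "{lo .. lo + d} \<subseteq> grid_interval a \<delta> (- m)"
    proof
      fix u assume "u \<in> {lo .. lo + d}"
      then have "- u \<in> grid_interval a \<delta> m" using \<open>{-(lo + d) .. -(lo + d) + d} \<subseteq> _\<close> by auto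
      then show "u \<in> grid_interval a \<delta> (- m)" using uminus_mem_grid_interval_iff[of "- u"] by simp
    qed
    then show ?thesis ..
  qed
qed

lemma cover_diam_ge_of_point_finite:
  assumes infinite: "infinite (UNIV :: 'k set)"
    and pf: "point_finite (c0 :: ('k \<Rightarrow> real) set) \<U>"
    and leb: "ereal R \<le> lebesgue_num c0 sup_dist \<U>" and r: "0 < r" "r < R"
  shows "ereal (2 * r) \<le> cover_diam sup_dist \<U>"
proof -
  obtain r' where "r < r'" and leb_r': "\<And>E. E \<subseteq> c0 \<Longrightarrow> set_diam sup_dist E < ereal r' \<Longrightarrow> \<exists>U\<in>\<U>. E \<subseteq> U"
    using lebesgue_numE[OF leb r(2)] by blast
  define G where
    "G k = {q \<in> (c0 :: ('k \<Rightarrow> real) set). q k \<in> {-r, 0} \<and> (\<forall>\<xi>. \<xi> \<noteq> k \<longrightarrow> q \<xi> \<in> {0, r})}" for k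
  have "\<bar>p \<xi> - q \<xi>\<bar> \<le> r" if "p \<in> G k" "q \<in> G k" for p q k \<xi>
    using that r(1) by (cases "\<xi> = k") (force simp: G_def)+
  then have "set_diam sup_dist (G k) \<le> ereal r" for k
    using r(1) by (intro set_diam_leI sup_dist_leI) auto
  then have "set_diam sup_dist (G k) < ereal r'" for k
    by (rule le_less_trans) (use \<open>r < r'\<close> in simp)
  then have "\<exists>U\<in>\<U>. G k \<subseteq> U" for k by (intro leb_r') (auto simp: G_def)
  then obtain f where f: "\<And>k. f k \<in> \<U> \<and> G k \<subseteq> f k" by metis
  have "range f \<subseteq> {U \<in> \<U>. (\<lambda>_. 0) \<in> U}" using f zero_in_c0 by (auto simp: G_def)
  moreover have "finite {U \<in> \<U>. (\<lambda>_. 0) \<in> U}" using pf zero_in_c0 by (auto simp: point_finite_def)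
  ultimately have "finite (range f)" by (rule finite_subset)
  then have "\<not> inj f" using infinite finite_imageD by blast
  then obtain k l where "k \<noteq> l" "f k = f l" unfolding inj_def by blast
  define a where "a = (\<lambda>\<xi>. if \<xi> = k then r else 0)"
  define b where "b = (\<lambda>\<xi>. if \<xi> = k then -r else 0)"
  have "a \<in> c0" "b \<in> c0" unfolding a_def b_def by (rule c0_unit_vector)+
  have "a \<in> G l" "b \<in> G k"
    using \<open>a \<in> c0\<close> \<open>b \<in> c0\<close> \<open>k \<noteq> l\<close> by (auto simp: G_def a_def b_def)
  then have "a \<in> f k" "b \<in> f k" using f \<open>f k = f l\<close> by blast+
  moreover have "2 * r \<le> sup_dist a b"
    using abs_le_sup_dist[OF \<open>a \<in> c0\<close> \<open>b \<in> c0\<close>, of k] r by (simp add: a_def b_def)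
  ultimately have "ereal (2 * r) \<le> set_diam sup_dist (f k)"
    by (meson dist_le_set_diam ereal_less_eq(3) order_trans)
  also have "\<dots> \<le> cover_diam sup_dist \<U>" using f by (intro set_diam_le_cover_diam) blast
  finally show ?thesis .
qed

lemma Delta_c_c0_ge:
  assumes "infinite (UNIV :: 'k set)" "0 \<le> R"
  shows "ereal (2 * R) \<le> Delta_c (c0 :: ('k \<Rightarrow> real) set) sup_dist R"
proof (rule Delta_c_geI)
  fix \<U> assume cover: "is_cover (c0 :: ('k \<Rightarrow> real) set) \<U>" and pf: "point_finite c0 \<U>"
    and leb: "ereal R \<le> lebesgue_num c0 sup_dist \<U>"
  obtain U where "U \<in> \<U>" using cover zero_in_c0 by (auto simp: is_cover_def)
  then have nonneg: "0 \<le> cover_diam sup_dist \<U>"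
    using set_diam_le_cover_diam set_diam_nonneg order_trans by blast
  show "ereal (2 * R) \<le> cover_diam sup_dist \<U>"
  proof (rule ereal_le_epsilon2)
    fix e :: real assume "0 < e"
    show "ereal (2 * R) \<le> cover_diam sup_dist \<U> + ereal e"
    proof (cases "2 * R < e")
      case True
      then show ?thesis using nonneg by (metis add_mono ereal_less_eq(3) le_less zero_ereal_def add_0)
    next
      case False
      then have "0 < R - e / 4" "R - e / 4 < R" using \<open>0 < e\<close> by auto
      from cover_diam_ge_of_point_finite[OF assms(1) pf leb this]
      have "ereal (2 * (R - e / 4)) + ereal e \<le> cover_diam sup_dist \<U> + ereal e"
        by (rule add_right_mono)
      moreover have "ereal (2 * R) \<le> ereal (2 * (R - e / 4)) + ereal e" using \<open>0 < e\<close> by simp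
      ultimately show ?thesis by (rule order_trans[rotated])
    qed
  qed
qed

lemma subset_interval_if_dist_le:
  fixes S :: "real set"
  assumes "\<And>s t. s \<in> S \<Longrightarrow> t \<in> S \<Longrightarrow> \<bar>s - t\<bar> \<le> d"
  shows "\<exists>lo. S \<subseteq> {lo .. lo + d}"
proof (cases "S = {}")
  case False
  then obtain s0 where "s0 \<in> S" by blast
  have "s0 - d \<le> t" if "t \<in> S" for t using assms[OF \<open>s0 \<in> S\<close> that] by linarith
  then have "bdd_below S" by (rule bdd_belowI)
  have "S \<subseteq> {Inf S .. Inf S + d}"
  proof
    fix s assume "s \<in> S"
    have "s - d \<le> Inf S" using False assms[OF \<open>s \<in> S\<close>] by (intro cInf_greatest) force+
    then show "s \<in> {Inf S .. Inf S + d}" using cInf_lower[OF \<open>s \<in> S\<close> \<open>bdd_below S\<close>] by simp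
  qed
  then show ?thesis ..
qed simp

definition grid_box :: "real \<Rightarrow> real \<Rightarrow> ('k \<Rightarrow> int) \<Rightarrow> ('k \<Rightarrow> real) set" where
  "grid_box a \<delta> k = {x \<in> c0. \<forall>\<xi>. x \<xi> \<in> grid_interval a \<delta> (k \<xi>)}"

lemma subset_grid_box:
  assumes "0 < a" "0 \<le> \<delta>" "E \<subseteq> c0" "set_diam sup_dist E < ereal a"
  shows "\<exists>k. E \<subseteq> grid_box a \<delta> k"
proof -
  obtain d where "0 \<le> d" "d < a" and diam: "\<And>x y. x \<in> E \<Longrightarrow> y \<in> E \<Longrightarrow> sup_dist x y \<le> d"
    using set_diam_less_ereal_obtains_real[OF assms(4)] by blast
  have "\<exists>m. (\<lambda>x. x \<xi>) ` E \<subseteq> grid_interval a \<delta> m" for \<xi>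
  proof -
    have "\<bar>x \<xi> - y \<xi>\<bar> \<le> d" if "x \<in> E" "y \<in> E" for x y
      using abs_le_sup_dist[of x y \<xi>] diam[OF that] that assms(3) by force
    then obtain lo where "(\<lambda>x. x \<xi>) ` E \<subseteq> {lo .. lo + d}"
      using subset_interval_if_dist_le[of "(\<lambda>x. x \<xi>) ` E" d] by blast
    then show ?thesis using interval_subset_grid_interval[OF assms(1,2) \<open>0 \<le> d\<close> \<open>d < a\<close>, of lo] by blast
  qed
  then obtain k where "\<And>\<xi>. (\<lambda>x. x \<xi>) ` E \<subseteq> grid_interval a \<delta> (k \<xi>)" by metis
  then have "E \<subseteq> grid_box a \<delta> k" using assms(3) by (auto simp: grid_box_def)
  then show ?thesis by blast
qed

lemma point_finite_grid_boxes:
  assumes "0 < a" "0 < \<delta>"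
  shows "point_finite c0 (range (grid_box a \<delta>))"
  unfolding point_finite_def
proof
  fix x :: "'k \<Rightarrow> real" assume "x \<in> c0"
  define S where "S = {\<xi>. \<delta> / 2 < \<bar>x \<xi>\<bar>}"
  define B where "B = (\<Union>\<xi>\<in>S. {m. x \<xi> \<in> grid_interval a \<delta> m})"
  have "finite S" using \<open>x \<in> c0\<close> half_gt_zero[OF assms(2)] unfolding S_def c0_def by blast
  then have "finite B" using finite_grid_indices assms by (simp add: B_def)
  define K where "K = {k. x \<in> grid_box a \<delta> k}"
  have "k \<xi> = 0" if "k \<in> K" "\<xi> \<notin> S" for k \<xi>
  proof (rule ccontr)
    assume "k \<xi> \<noteq> 0"
    moreover have "x \<xi> \<in> grid_interval a \<delta> (k \<xi>)" using that(1) by (simp add: K_def grid_box_def)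
    ultimately have "\<delta> + (\<bar>of_int (k \<xi>)\<bar> - 1) * a \<le> \<bar>x \<xi>\<bar>"
      using abs_ge_if_mem_grid_interval assms(1) by force
    moreover have "0 \<le> (\<bar>of_int (k \<xi>)\<bar> - 1) * a" using \<open>k \<xi> \<noteq> 0\<close> assms(1) by simp
    ultimately have "\<delta> \<le> \<bar>x \<xi>\<bar>" by linarith
    then show False using that(2) assms(2) by (simp add: S_def)
  qed
  then have "K \<subseteq> {k. \<forall>\<xi>. (\<xi> \<in> S \<longrightarrow> k \<xi> \<in> B) \<and> (\<xi> \<notin> S \<longrightarrow> k \<xi> = 0)}"
    by (auto simp: K_def B_def grid_box_def)
  then have "finite K" using finite_set_of_finite_funs[OF \<open>finite S\<close> \<open>finite B\<close>] finite_subset by blast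
  moreover have "{U \<in> range (grid_box a \<delta>). x \<in> U} \<subseteq> grid_box a \<delta> ` K" by (auto simp: K_def)
  ultimately show "finite {U \<in> range (grid_box a \<delta>). x \<in> U}" using finite_subset by blast
qed

lemma lebesgue_num_grid_boxes:
  assumes "0 < a" "0 \<le> \<delta>"
  shows "ereal a \<le> lebesgue_num c0 sup_dist (range (grid_box a \<delta>))"
  using subset_grid_box[OF assms] assms(1) by (intro lebesgue_num_geI) auto

lemma is_cover_grid_boxes:
  assumes "0 < a" "0 \<le> \<delta>"
  shows "is_cover c0 (range (grid_box a \<delta>))"
  unfolding is_cover_def
proof (intro conjI subset_antisym)
  show "\<forall>U\<in>range (grid_box a \<delta>). U \<subseteq> c0" "\<Union> (range (grid_box a \<delta>)) \<subseteq> c0"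
    by (auto simp: grid_box_def)
  show "c0 \<subseteq> \<Union> (range (grid_box a \<delta>))"
  proof
    fix x :: "'k \<Rightarrow> real" assume "x \<in> c0"
    have "set_diam sup_dist {x} \<le> ereal 0" by (intro set_diam_leI sup_dist_leI) auto
    then have "set_diam sup_dist {x} < ereal a" using assms(1) by (simp add: le_less_trans)
    then show "x \<in> \<Union> (range (grid_box a \<delta>))"
      using subset_grid_box[OF assms, of "{x}"] \<open>x \<in> c0\<close> by blast
  qed
qed

lemma cover_diam_grid_boxes:
  assumes "0 \<le> a" "0 \<le> \<delta>"
  shows "cover_diam sup_dist (range (grid_box a \<delta>)) \<le> ereal (2 * a + 2 * \<delta>)"
  unfolding cover_diam_def
proof (rule SUP_least, intro set_diam_leI sup_dist_leI)
  fix U x y \<xi> assume "U \<in> range (grid_box a \<delta>)" "x \<in> U" "y \<in> U"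
  then obtain k where "x \<in> grid_box a \<delta> k" "y \<in> grid_box a \<delta> k" by blast
  then show "\<bar>x \<xi> - y \<xi>\<bar> \<le> 2 * a + 2 * \<delta>"
    using assms by (intro grid_interval_dist_le[of _ a \<delta> "k \<xi>"]) (auto simp: grid_box_def)
qed (use assms in simp)

lemma Delta_c_c0_le:
  assumes "0 \<le> R"
  shows "Delta_c (c0 :: ('k \<Rightarrow> real) set) sup_dist R \<le> ereal (2 * R)"
proof (rule ereal_le_epsilon2)
  fix e :: real assume "0 < e"
  define \<delta> where "\<delta> = e / 4"
  define \<U> :: "('k \<Rightarrow> real) set set" where "\<U> = range (grid_box (R + \<delta>) \<delta>)"
  have "0 < \<delta>" "0 < R + \<delta>" using \<open>0 < e\<close> assms by (auto simp: \<delta>_def)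
  have "ereal R \<le> ereal (R + \<delta>)" using \<open>0 < \<delta>\<close> by simp
  also have "\<dots> \<le> lebesgue_num c0 sup_dist \<U>"
    unfolding \<U>_def using \<open>0 < \<delta>\<close> \<open>0 < R + \<delta>\<close> by (intro lebesgue_num_grid_boxes) auto
  finally have "ereal R \<le> lebesgue_num c0 sup_dist \<U>" .
  moreover have "is_cover c0 \<U>" "point_finite c0 \<U>"
    unfolding \<U>_def using \<open>0 < \<delta>\<close> \<open>0 < R + \<delta>\<close>
    by (auto intro: is_cover_grid_boxes point_finite_grid_boxes)
  ultimately have "Delta_c (c0 :: ('k \<Rightarrow> real) set) sup_dist R \<le> cover_diam sup_dist \<U>"
    by (blast intro: Delta_c_le_cover_diam)
  also have "\<dots> \<le> ereal (2 * (R + \<delta>) + 2 * \<delta>)"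
    unfolding \<U>_def using \<open>0 < \<delta>\<close> \<open>0 < R + \<delta>\<close> by (intro cover_diam_grid_boxes) auto
  finally show "Delta_c (c0 :: ('k \<Rightarrow> real) set) sup_dist R \<le> ereal (2 * R) + ereal e"
    by (simp add: \<delta>_def add.commute)
qed

theorem corollary3p11:
  assumes "infinite (UNIV :: 'k set)"
    and "0 \<le> R"
  shows "Delta_c (c0 :: ('k \<Rightarrow> real) set) sup_dist R = ereal (2 * R)"
  using Delta_c_c0_le[OF assms(2)] Delta_c_c0_ge[OF assms] by (rule antisym)

end
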